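(* Let $d\in\mathbb{N}$. For each $s\in\mathbb{N}$, let $\chi_d(s)$ be the number of points $(m,n)\in\mathbb{Z}^2$ for which the conditions $$(m,n)=\sum_{k=1}^s\big(f(-i_k),\,f(-i_k-1)\big)\quad\text{and}\quad \sum_{k=1}^s f(i_k)\le d$$ admit a solution in integers $0\le i_1\le\dots\le i_s$, and $s$ is maximal with this property (i.e. no solution exists with a larger number of terms). Then $$\chi_d(s)=\begin{cases}2s+1 & \text{if } 0\le s<d,\\ d+1 & \text{if } s=d,\\ 0 & \text{if } s>d.\end{cases}$$ Equivalently: for every $s\in\mathbb{N}$, the set $E_d(s)=\{\alpha\in E_d:\ s_d(\alpha)=s\}$ is empty for $s>d$, has $2s+1$ elements for $0\le s<d$, and has $d+1$ elements for $s=d$.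
   Context: $\mathbb{N}=\{0,1,2,\dots\}$. Let $f\colon\mathbb{Z}\to\mathbb{Z}$ be defined by $f(0)=f(1)=1$ and $f(i+2)=f(i+1)+f(i)$ for all $i\in\mathbb{Z}$ (so $(f(i))_{i\ge0}$ is the Fibonacci sequence, and e.g. $f(-1)=0$, $f(-2)=1$). An empty sum is $0$ (so $(m,n)=(0,0)$ satisfies the conditions with $s=0$). Let $\gamma=(1+\sqrt5)/2$ and $\mathbb{Z}[\gamma]=\mathbb{Z}\oplus\mathbb{Z}\gamma^{-1}$; one has $\gamma^{-i}=f(-i)+f(-i-1)\gamma^{-1}$ for $i\in\mathbb{Z}$. For $d\in\mathbb{N}$, $E_d$ denotes the set of $\alpha\in\mathbb{Z}[\gamma]$ such that $\alpha=\gamma^{-i_1}+\dots+\gamma^{-i_s}$ and $f(i_1)+\dots+f(i_s)\le d$ for some $s\in\mathbb{N}$ and integers $0\le i_1\le\dots\le i_s$; for $\alpha\in E_d$, $s_d(\alpha)$ is the largest such $s$. *)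

theory Defs
  imports Main
begin

fun fpos :: "nat \<Rightarrow> int" where
  "fpos 0 = 1"
| "fpos (Suc 0) = 1"
| "fpos (Suc (Suc n)) = fpos (Suc n) + fpos n"

text \<open>Negative direction: fneg n = f(-n); f(0)=1, f(-1)=0, f(i) = f(i+2) - f(i+1).\<close>
fun fneg :: "nat \<Rightarrow> int" where
  "fneg 0 = 1"
| "fneg (Suc 0) = 0"
| "fneg (Suc (Suc n)) = fneg n - fneg (Suc n)"

definition fib_ext :: "int \<Rightarrow> int" where
  "fib_ext i = (if 0 \<le> i then fpos (nat i) else fneg (nat (- i)))"

lemma fneg_rec: "fneg (Suc (Suc n)) = fneg n - fneg (Suc n)" by simp

lemma fib_ext_rec: "fib_ext (i + 2) = fib_ext (i + 1) + fib_ext i"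
proof (cases "0 \<le> i")
  case True
  then have "nat (i + 2) = Suc (Suc (nat i))" "nat (i + 1) = Suc (nat i)" by auto
  then show ?thesis using True by (simp add: fib_ext_def)
next
  case False
  show ?thesis
  proof (cases "i = -1")
    case True then show ?thesis by (simp add: fib_ext_def)
  next
    case F2: False
    define n where "n = nat (- i - 2)"
    have e: "nat (- i) = Suc (Suc n)" "nat (- (i + 1)) = Suc n" "nat (- (i + 2)) = n"
      using False F2 by (auto simp: n_def)
    have "\<not> 0 \<le> i + 1" using False F2 by auto
    moreover have "(0 \<le> i + 2) = (n = 0)" using False F2 by (auto simp: n_def)
    ultimately show ?thesis using False e
      by (cases n) (auto simp: fib_ext_def)
  qed
qed

lemma "fib_ext 0 = 1" "fib_ext 1 = 1" "fib_ext (-1) = 0" "fib_ext (-2) = 1"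
  by (simp_all add: fib_ext_def numeral_2_eq_2)

definition admits :: "nat \<Rightarrow> int \<times> int \<Rightarrow> nat \<Rightarrow> bool" where
  "admits d p s \<longleftrightarrow> (\<exists>is :: int list. length is = s \<and> sorted is \<and> (\<forall>i\<in>set is. 0 \<le> i) \<and>
      p = ((\<Sum>i\<leftarrow>is. fib_ext (- i)), (\<Sum>i\<leftarrow>is. fib_ext (- i - 1))) \<and>
      (\<Sum>i\<leftarrow>is. fib_ext i) \<le> int d)"

definition Eds :: "nat \<Rightarrow> nat \<Rightarrow> (int \<times> int) set" where
  "Eds d s = {p. admits d p s \<and> (\<forall>t. s < t \<longrightarrow> \<not> admits d p t)}"

definition chi :: "nat \<Rightarrow> nat \<Rightarrow> nat" where
  "chi d s = card (Eds d s)"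

end

theory Submission
  imports Defs "HOL-Library.Multiset" Complex_Main
begin

text \<open>
  Represent a family 0 <= i_1 <= ... <= i_s by a list of naturals; it determines the
  point p = sum_k (f(-i_k), f(-i_k - 1)) and has weight f(i_1) + ... + f(i_s).  Every nonempty
  representation can be rewritten, keeping p, without losing terms and without gaining weight,
  into a normal form: exponent k used a >= 1 times, k+1 used b times and k+2 used c times.
  Two normal forms of the same point are compared through coordinates with respect to the
  basis (g (k+1), g (k+2)) of backward-Fibonacci sequences (Cassini's identity) and through
  the real value sum_k gamma^(-i_k): the one with more terms is heavier by at least 2 f(k+1),
  and splitting one term (gamma^(-k) = gamma^(-k-1) + gamma^(-k-2)) costs exactly 2 f(k+1).
  Hence, for s >= 1, the points of E_d(s) correspond bijectively to the normal forms with s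
  terms of weight <= d whose split has weight > d.  These are counted with the bijection lift,
  which maps all normal forms with s terms onto those of weight > s+1 and raises the weight by
  exactly the split cost; what remains are the forms of weight s (s+1 of them) and of weight
  s+1 (s of them), giving 0, d+1 or 2s+1 points.  The case s = 0 is the empty sum alone.
\<close>

lemma fpos_ge1: "1 \<le> fpos n"
  by (induction n rule: fpos.induct) auto

lemma fpos_Suc_mono: "fpos n \<le> fpos (Suc n)"
  using fpos_ge1[of "n - 1"] by (cases n) auto

lemma fpos_mono: "m \<le> n \<Longrightarrow> fpos m \<le> fpos n"
  by (induction n rule: dec_induct) (auto intro: order_trans fpos_Suc_mono)

lemma fpos_ge_index: "int n \<le> fpos n"
proof (induction n rule: fpos.induct)
  case (3 n) then show ?case using fpos_ge1[of n] by simp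
qed auto

text \<open>A finite family of exponents 0 <= i_1 <= ... <= i_s is represented by a list of naturals
  (order is irrelevant); sum_at g xs sums g over it.\<close>

definition sum_at :: "(nat \<Rightarrow> 'a::comm_monoid_add) \<Rightarrow> nat list \<Rightarrow> 'a" where
  "sum_at g xs = (\<Sum>i\<leftarrow>xs. g i)"

lemma sum_at_simps [simp]:
  "sum_at g [] = 0" "sum_at g (x # xs) = g x + sum_at g xs"
  "sum_at g (xs @ ys) = sum_at g xs + sum_at g ys"
  "sum_at g (replicate n x) = of_nat n * g x" for g :: "nat \<Rightarrow> 'a::semiring_1"
  by (simp_all add: sum_at_def sum_list_replicate of_nat_mult)

lemma sum_at_mset: "mset xs = mset ys \<Longrightarrow> sum_at g xs = sum_at g ys"
  unfolding sum_at_def by (metis mset_map sum_mset_sum_list)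

definition weight :: "nat list \<Rightarrow> int" where
  "weight xs = sum_at fpos xs"

definition pt :: "nat list \<Rightarrow> int \<times> int" where
  "pt xs = (sum_at fneg xs, sum_at (\<lambda>i. fneg (Suc i)) xs)"

lemma weight_simps [simp]:
  "weight [] = 0" "weight (x # xs) = fpos x + weight xs" "weight (xs @ ys) = weight xs + weight ys"
  by (simp_all add: weight_def)

lemma length_le_weight: "int (length xs) \<le> weight xs"
  by (induction xs) (auto simp: weight_def intro: add_mono fpos_ge1)

definition backward_fib :: "(nat \<Rightarrow> 'a::comm_ring_1) \<Rightarrow> bool" where
  "backward_fib g \<longleftrightarrow> (\<forall>n. g n = g (Suc n) + g (Suc (Suc n)))"

lemma backward_fibD: "backward_fib g \<Longrightarrow> g n = g (Suc n) + g (Suc (Suc n))"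
  unfolding backward_fib_def by blast

lemma backward_fib_fneg: "backward_fib fneg" "backward_fib (\<lambda>i. fneg (Suc i))"
  unfolding backward_fib_def by simp_all

lemma backward_fib_closed_form:
  assumes "backward_fib g"
  shows "g n = of_int (fneg n) * g 0 + of_int (fneg (Suc n)) * g 1"
proof (induction n rule: fneg.induct)
  case (3 n)
  have "g (Suc (Suc n)) = g n - g (Suc n)" using backward_fibD[OF assms, of n] by simp
  then show ?case using 3 by (simp add: algebra_simps)
qed simp_all

lemma sum_at_backward_fib:
  assumes "backward_fib g"
  shows "sum_at g xs = of_int (fst (pt xs)) * g 0 + of_int (snd (pt xs)) * g 1"
proof (induction xs)
  case (Cons x xs)
  have "g x = of_int (fneg x) * g 0 + of_int (fneg (Suc x)) * g 1"
    by (rule backward_fib_closed_form[OF assms])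
  with Cons.IH show ?case by (simp add: pt_def distrib_right)
qed (simp add: pt_def)

lemma sum_at_eq_if_pt_eq:
  "pt xs = pt ys \<Longrightarrow> backward_fib g \<Longrightarrow> sum_at g xs = sum_at g ys"
  by (simp add: sum_at_backward_fib)

lemma pt_eqI:
  "(\<And>g :: nat \<Rightarrow> int. backward_fib g \<Longrightarrow> sum_at g xs = sum_at g ys) \<Longrightarrow> pt xs = pt ys"
  using backward_fib_fneg by (simp add: pt_def)

lemma fneg_cassini: "\<bar>fneg n * fneg (Suc (Suc n)) - fneg (Suc n) * fneg (Suc n)\<bar> = 1"
proof (induction n)
  case (Suc n)
  have "fneg (Suc n) * fneg (Suc (Suc (Suc n))) - fneg (Suc (Suc n)) * fneg (Suc (Suc n))
      = - (fneg n * fneg (Suc (Suc n)) - fneg (Suc n) * fneg (Suc n))"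
    by (simp add: algebra_simps)
  then show ?case using Suc by simp
qed simp

text \<open>Consequently the pair (g (k+1), g (k+2)) is a basis: coefficients of a linear form in it
  are determined by the values on all backward-Fibonacci sequences.\<close>

lemma level_coords_unique:
  fixes x y x' y' :: int
  assumes "\<And>g :: nat \<Rightarrow> int. backward_fib g \<Longrightarrow>
    x * g (Suc k) + y * g (Suc (Suc k)) = x' * g (Suc k) + y' * g (Suc (Suc k))"
  shows "x = x' \<and> y = y'"
proof -
  define u where "u = fneg (Suc k)"
  define v where "v = fneg (Suc (Suc k))"
  define w where "w = fneg (Suc (Suc (Suc k)))"
  have D: "\<bar>u * w - v * v\<bar> = 1" using fneg_cassini[of "Suc k"] by (simp add: u_def v_def w_def)
  have e1: "(x - x') * u + (y - y') * v = 0"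
    using assms[OF backward_fib_fneg(1)] by (simp add: u_def v_def algebra_simps)
  have e2: "(x - x') * v + (y - y') * w = 0"
    using assms[OF backward_fib_fneg(2)] by (simp add: v_def w_def algebra_simps)
  have "(x - x') * (u * w - v * v) = w * ((x - x') * u + (y - y') * v) - v * ((x - x') * v + (y - y') * w)"
    "(y - y') * (u * w - v * v) = u * ((x - x') * v + (y - y') * w) - v * ((x - x') * u + (y - y') * v)"
    by (simp_all add: algebra_simps)
  then have "(x - x') * (u * w - v * v) = 0" "(y - y') * (u * w - v * v) = 0"
    unfolding e1 e2 by simp_all
  moreover have "u * w - v * v \<noteq> 0" using D by auto
  ultimately show ?thesis by simp
qed

text \<open>1/gamma = (sqrt 5 - 1)/2 is a root of x^2 + x = 1, so its powers are backward-Fibonacci.\<close>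

definition ginv :: real where
  "ginv = (sqrt 5 - 1) / 2"

lemma ginv_bounds: "0 < ginv" "ginv < 1"
proof -
  have "1 < sqrt 5" "sqrt 5 < 3" by (simp_all add: real_less_rsqrt real_less_lsqrt)
  then show "0 < ginv" "ginv < 1" by (simp_all add: ginv_def)
qed

lemma backward_fib_ginv: "backward_fib (\<lambda>n. ginv ^ n)"
proof -
  have "ginv + ginv * ginv = 1" unfolding ginv_def by (simp add: field_simps algebra_simps)
  then have "ginv ^ n * (ginv + ginv * ginv) = ginv ^ n" for n by simp
  then show ?thesis unfolding backward_fib_def by (simp add: algebra_simps)
qed

definition alpha :: "nat list \<Rightarrow> real" where
  "alpha xs = sum_at (\<lambda>n. ginv ^ n) xs"

lemma alpha_pt: "alpha xs = of_int (fst (pt xs)) + of_int (snd (pt xs)) * ginv"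
  using sum_at_backward_fib[OF backward_fib_ginv] by (simp add: alpha_def)

lemma alpha_pos: "xs \<noteq> [] \<Longrightarrow> 0 < alpha xs"
proof (induction xs)
  case (Cons x xs)
  have "0 < ginv ^ x" using ginv_bounds by simp
  moreover have "0 \<le> alpha xs" using Cons.IH by (cases xs) (auto simp: alpha_def)
  ultimately show ?case by (simp add: alpha_def)
qed simp

lemma ginv_power_mono: "m \<le> n \<Longrightarrow> ginv ^ n \<le> ginv ^ m"
  using ginv_bounds by (intro power_decreasing) auto

lemma ginv_power_strict_mono: "m < n \<Longrightarrow> ginv ^ n < ginv ^ m"
  using ginv_bounds by (intro power_strict_decreasing) auto

lemma sum_list_sort:
  fixes h :: "'a::linorder \<Rightarrow> 'b::comm_monoid_add"
  shows "(\<Sum>x\<leftarrow>sort xs. h x) = (\<Sum>x\<leftarrow>xs. h x)"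
proof -
  have "mset (map h (sort xs)) = mset (map h xs)" by simp
  then have "sum_mset (mset (map h (sort xs))) = sum_mset (mset (map h xs))" by (rule arg_cong)
  then show ?thesis by (simp only: sum_mset_sum_list)
qed

lemma fib_ext_of_nat [simp]:
  "fib_ext (int x) = fpos x" "fib_ext (- int x) = fneg x" "fib_ext (- int x - 1) = fneg (Suc x)"
  by (cases x; simp add: fib_ext_def nat_add_distrib)+

lemma fib_ext_sums:
  "(\<Sum>i\<leftarrow>map int xs. fib_ext (- i)) = fst (pt xs)"
  "(\<Sum>i\<leftarrow>map int xs. fib_ext (- i - 1)) = snd (pt xs)"
  "(\<Sum>i\<leftarrow>map int xs. fib_ext i) = weight xs"
  by (induction xs) (simp_all add: pt_def weight_def)

definition adm :: "nat \<Rightarrow> int \<times> int \<Rightarrow> nat \<Rightarrow> bool" where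
  "adm d p s \<longleftrightarrow> (\<exists>xs. length xs = s \<and> pt xs = p \<and> weight xs \<le> int d)"

lemma admits_iff_adm: "admits d p s \<longleftrightarrow> adm d p s"
proof
  assume "admits d p s"
  then obtain idx where idx: "length idx = s" "\<forall>i\<in>set idx. 0 \<le> i"
    "p = ((\<Sum>i\<leftarrow>idx. fib_ext (- i)), (\<Sum>i\<leftarrow>idx. fib_ext (- i - 1)))" "(\<Sum>i\<leftarrow>idx. fib_ext i) \<le> int d"
    unfolding admits_def by blast
  have "idx = map int (map nat idx)" using idx(2) by (induction idx) auto
  then obtain xs where xs: "idx = map int xs" by blast
  have "p = pt xs" using idx(3) unfolding xs fib_ext_sums by simp
  moreover have "weight xs \<le> int d" using idx(4) unfolding xs fib_ext_sums .
  ultimately show "adm d p s" unfolding adm_def using idx(1) xs by auto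
next
  assume "adm d p s"
  then obtain xs where xs: "length xs = s" "pt xs = p" "weight xs \<le> int d"
    unfolding adm_def by blast
  let ?ts = "sort (map int xs)"
  have "p = ((\<Sum>i\<leftarrow>?ts. fib_ext (- i)), (\<Sum>i\<leftarrow>?ts. fib_ext (- i - 1)))"
    unfolding sum_list_sort fib_ext_sums xs(2)[symmetric] by simp
  moreover have "(\<Sum>i\<leftarrow>?ts. fib_ext i) \<le> int d"
    unfolding sum_list_sort fib_ext_sums by (rule xs(3))
  moreover have "length ?ts = s" "sorted ?ts" "\<forall>i\<in>set ?ts. 0 \<le> i" using xs(1) by auto
  ultimately show "admits d p s" unfolding admits_def by blast
qed

lemma Eds_adm: "Eds d s = {p. adm d p s \<and> (\<forall>t. s < t \<longrightarrow> \<not> adm d p t)}"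
  by (simp add: Eds_def admits_iff_adm)

lemma adm_length_le:
  assumes "adm d p s"
  shows "s \<le> d"
proof -
  obtain xs where "length xs = s" "weight xs \<le> int d" using assms unfolding adm_def by blast
  then show ?thesis using length_le_weight[of xs] by linarith
qed

text \<open>A block (k, a, b, c) is the representation using exponent k a times, k+1 b times and
  k+2 c times.  Blocks with a >= 1 are the normal forms.\<close>

type_synonym quad = "nat \<times> nat \<times> nat \<times> nat"

fun block :: "quad \<Rightarrow> nat list" where
  "block (k, a, b, c) = replicate a k @ replicate b (Suc k) @ replicate c (Suc (Suc k))"

declare block.simps [simp del]

lemma sum_at_block:
  "sum_at g (block (k, a, b, c)) = of_nat a * g k + of_nat b * g (Suc k) + of_nat c * g (Suc (Suc k))"
  for g :: "nat \<Rightarrow> 'a::semiring_1"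
  by (simp add: block.simps add.assoc)

lemma length_block [simp]: "length (block (k, a, b, c)) = a + b + c"
  by (simp add: block.simps)

lemma weight_block:
  "weight (block (k, a, b, c)) = int a * fpos k + int b * fpos (Suc k) + int c * fpos (Suc (Suc k))"
  by (simp add: weight_def sum_at_block)

lemma mset_span_block:
  assumes "set xs \<subseteq> {k, Suc k, Suc (Suc k)}"
  shows "mset xs = mset (block (k, count_list xs k, count_list xs (Suc k), count_list xs (Suc (Suc k))))"
  using assms by (induction xs) (auto simp: block.simps replicate_mset_Suc)

fun chain :: "nat \<Rightarrow> nat \<Rightarrow> nat list" where
  "chain m 0 = [m]"
| "chain m (Suc q) = (m + 2) # chain (m + 2) q"

lemma sum_at_chain:
  assumes "backward_fib g"
  shows "sum_at g (chain m q) = g (m + 1) + g (m + 2 * q + 2)"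
proof (induction m q rule: chain.induct)
  case (1 m)
  show ?case using backward_fibD[OF assms, of m] by simp
next
  case (2 m q)
  have "g (m + 1) = g (m + 2) + g (m + 3)"
    using backward_fibD[OF assms, of "m + 1"] by (simp add: eval_nat_numeral)
  then show ?case using 2 by (simp add: algebra_simps eval_nat_numeral)
qed

lemma weight_chain: "weight (chain m q) = fpos (m + 2 * q + 2) - fpos (m + 1)"
  by (induction m q rule: chain.induct) (simp_all add: eval_nat_numeral)

lemma length_chain [simp]: "length (chain m q) = q + 1"
  by (induction m q rule: chain.induct) simp_all

text \<open>Two exponents i and i+r with r >= 3 can be replaced by at least two exponents representing
  the same value, either of strictly smaller weight or of equal weight with at least three
  exponents (odd r: (i+1) followed by a chain; even r: (i+2, i+2) followed by a chain).\<close>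

lemma pair_replacement:
  assumes "3 \<le> r"
  obtains ys where "\<And>g :: nat \<Rightarrow> int. backward_fib g \<Longrightarrow> sum_at g ys = g i + g (i + r)"
    and "2 \<le> length ys" and "weight ys \<le> fpos i + fpos (i + r)"
    and "weight ys < fpos i + fpos (i + r) \<or> 3 \<le> length ys"
proof (cases "odd r")
  case True
  then have "r = 2 * ((r - 3) div 2) + 3" using assms by presburger
  then obtain q where r: "r = 2 * q + 3" by blast
  let ?ys = "Suc i # chain (Suc i) q"
  have "sum_at g ?ys = g i + g (i + r)" if "backward_fib g" for g :: "nat \<Rightarrow> int"
    using backward_fibD[OF that, of i] by (simp add: sum_at_chain[OF that] r eval_nat_numeral)
  moreover have "weight ?ys = fpos (i + r) - fpos i"
  proof -
    have "weight ?ys = fpos (Suc i) + (fpos (Suc i + 2 * q + 2) - fpos (Suc i + 1))"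
      by (simp add: weight_chain)
    also have "Suc i + 2 * q + 2 = i + r" using r by simp
    finally show ?thesis by simp
  qed
  ultimately show ?thesis using fpos_ge1[of i] by (intro that[of ?ys]) auto
next
  case False
  then have "r = 2 * ((r - 4) div 2) + 4" using assms by presburger
  then obtain q where r: "r = 2 * q + 4" by blast
  let ?ys = "[i + 2, i + 2] @ chain (i + 2) q"
  have "sum_at g ?ys = g i + g (i + r)" if "backward_fib g" for g :: "nat \<Rightarrow> int"
    using backward_fibD[OF that, of i] backward_fibD[OF that, of "Suc i"]
    by (simp add: sum_at_chain[OF that] r eval_nat_numeral)
  moreover have "weight ?ys = fpos i + fpos (i + r)"
  proof -
    have "weight ?ys = 2 * fpos (i + 2) + (fpos (i + 2 + 2 * q + 2) - fpos (i + 2 + 1))"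
      by (simp add: weight_chain)
    also have "i + 2 + 2 * q + 2 = i + r" using r by simp
    finally show ?thesis by (simp add: eval_nat_numeral)
  qed
  ultimately show ?thesis by (intro that[of ?ys]) auto
qed

lemma reduce_distant_pair:
  assumes "i \<in> set xs" "i + r \<in> set xs" "3 \<le> r"
  obtains zs where "pt zs = pt xs" "length xs \<le> length zs" "weight zs \<le> weight xs"
    "weight zs < weight xs \<or> length xs < length zs"
proof -
  obtain ys where ys: "\<And>g :: nat \<Rightarrow> int. backward_fib g \<Longrightarrow> sum_at g ys = g i + g (i + r)"
    "2 \<le> length ys" "weight ys \<le> fpos i + fpos (i + r)"
    "weight ys < fpos i + fpos (i + r) \<or> 3 \<le> length ys"
    using pair_replacement[OF assms(3), of i] by blast
  define rest where "rest = remove1 i (remove1 (i + r) xs)"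
  have "i \<in># mset (remove1 (i + r) xs)"
    unfolding set_mset_mset using assms by (simp add: in_set_remove1)
  then have "mset (remove1 (i + r) xs) = add_mset i (mset rest)"
    unfolding rest_def mset_remove1[of i] by (rule insert_DiffM[symmetric])
  moreover have "mset xs = add_mset (i + r) (mset (remove1 (i + r) xs))"
    unfolding mset_remove1 by (rule insert_DiffM[symmetric]) (use assms(2) in simp)
  ultimately have m: "mset xs = mset ([i, i + r] @ rest)"
    by (simp del: mset_remove1 add: add_mset_commute)
  have "pt (ys @ rest) = pt xs"
    by (rule pt_eqI) (simp add: sum_at_mset[OF m] ys(1))
  moreover have "weight xs = fpos i + fpos (i + r) + weight rest" "length xs = length rest + 2"
    using sum_at_mset[OF m, of fpos] mset_eq_length[OF m] by (simp_all add: weight_def)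
  ultimately show ?thesis using ys(2-4) by (intro that[of "ys @ rest"]) auto
qed

text \<open>Induction on weight, then on
  weight - length, using the previous reduction while min and max are 3 or more apart.\<close>

lemma normal_form_exists:
  assumes "xs \<noteq> []"
  shows "\<exists>k a b c. 1 \<le> a \<and> pt (block (k, a, b, c)) = pt xs \<and> length xs \<le> a + b + c \<and>
           weight (block (k, a, b, c)) \<le> weight xs"
  using assms
proof (induction xs rule: wf_induct[OF wf_measures[of
      "[\<lambda>xs. nat (weight xs), \<lambda>xs. nat (weight xs - int (length xs))]"]])
  case (1 xs)
  define i where "i = Min (set xs)"
  define j where "j = Max (set xs)"
  have ij: "i \<in> set xs" "j \<in> set xs" "\<And>x. x \<in> set xs \<Longrightarrow> i \<le> x \<and> x \<le> j"
    using "1.prems" by (auto simp: i_def j_def)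
  show ?case
  proof (cases "j \<le> i + 2")
    case True
    define blk where "blk = (i, count_list xs i, count_list xs (Suc i), count_list xs (Suc (Suc i)))"
    have "set xs \<subseteq> {i, Suc i, Suc (Suc i)}" using ij(3) True by fastforce
    then have m: "mset xs = mset (block blk)" unfolding blk_def by (rule mset_span_block)
    have "pt (block blk) = pt xs" "length (block blk) = length xs" "weight (block blk) = weight xs"
      by (simp_all add: pt_def weight_def sum_at_mset[OF m] mset_eq_length[OF m])
    moreover have "1 \<le> count_list xs i" using ij(1) count_list_0_iff[of xs i] by linarith
    ultimately show ?thesis unfolding blk_def by fastforce
  next
    case False
    then have r: "3 \<le> j - i" "i + (j - i) \<in> set xs" using ij(2) by auto
    obtain zs where zs: "pt zs = pt xs" "length xs \<le> length zs" "weight zs \<le> weight xs"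
      "weight zs < weight xs \<or> length xs < length zs"
      using reduce_distant_pair[OF ij(1) r(2) r(1)] by blast
    then have "(zs, xs) \<in> measures [\<lambda>xs. nat (weight xs), \<lambda>xs. nat (weight xs - int (length xs))]"
      using length_le_weight[of zs] length_le_weight[of xs] by auto
    moreover have "zs \<noteq> []" using zs(2) "1.prems" by auto
    ultimately obtain k a b c where "1 \<le> a" "pt (block (k, a, b, c)) = pt zs"
      "length zs \<le> a + b + c" "weight (block (k, a, b, c)) \<le> weight zs"
      using "1.IH" by blast
    then show ?thesis using zs by fastforce
  qed
qed

lemma sum_at_block_coords:
  fixes g :: "nat \<Rightarrow> int"
  assumes "backward_fib g"
  shows "sum_at g (block (k, a, b, c)) = int (a + b) * g (Suc k) + int (a + c) * g (Suc (Suc k))"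
    and "sum_at g (block (Suc k, a, b, c)) = int (a + c) * g (Suc k) + (int b - int c) * g (Suc (Suc k))"
  using backward_fibD[OF assms, of k] backward_fibD[OF assms, of "Suc k"]
  by (simp_all add: sum_at_block algebra_simps)

lemma block_coords_eq:
  assumes "pt (block x) = pt (block y)"
    and "\<And>g :: nat \<Rightarrow> int. backward_fib g \<Longrightarrow> sum_at g (block x) = u * g (Suc k) + v * g (Suc (Suc k))"
    and "\<And>g :: nat \<Rightarrow> int. backward_fib g \<Longrightarrow> sum_at g (block y) = u' * g (Suc k) + v' * g (Suc (Suc k))"
  shows "u = u' \<and> v = v'"
proof (rule level_coords_unique)
  fix g :: "nat \<Rightarrow> int"
  assume g: "backward_fib g"
  have "sum_at g (block x) = sum_at g (block y)" by (rule sum_at_eq_if_pt_eq[OF assms(1) g])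
  then show "u * g (Suc k) + v * g (Suc (Suc k)) = u' * g (Suc k) + v' * g (Suc (Suc k))"
    using assms(2,3)[OF g] by simp
qed

text \<open>Comparison of two normal forms of the same point.  Same level: the forms differ by
  replacing copies of k by pairs (k+1, k+2), each replacement adding weight 2 f(k+1).\<close>

lemma compare_same_level:
  assumes "pt (block (k, a, b, c)) = pt (block (k, a', b', c'))" "a + b + c \<le> a' + b' + c'"
  shows "(a, b, c) = (a', b', c') \<or>
    (a + b + c < a' + b' + c' \<and>
      weight (block (k, a, b, c)) + 2 * fpos (Suc k) \<le> weight (block (k, a', b', c')))"
proof -
  have "int (a + b) = int (a' + b') \<and> int (a + c) = int (a' + c')"
    using assms(1) by (rule block_coords_eq) (simp_all add: sum_at_block_coords)
  then have b': "int b' = int a + int b - int a'" and c': "int c' = int a + int c - int a'"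
    by linarith+
  show ?thesis
  proof (cases "a' < a")
    case True
    have "weight (block (k, a', b', c')) - weight (block (k, a, b, c))
        = (int a - int a') * (2 * fpos (Suc k))"
      unfolding weight_block b' c' by (simp add: algebra_simps)
    moreover have "1 * (2 * fpos (Suc k)) \<le> (int a - int a') * (2 * fpos (Suc k))"
      using True fpos_ge1[of "Suc k"] by (intro mult_right_mono) auto
    moreover have "a + b + c < a' + b' + c'" using True b' c' by linarith
    ultimately show ?thesis by simp
  next
    case False
    then have "a' = a" "b' = b" "c' = c" using assms(2) b' c' by linarith+
    then show ?thesis by simp
  qed
qed

lemma compare_next_level:
  assumes "1 \<le> a" "pt (block (k, a, b, c)) = pt (block (Suc k, a', b', c'))"
  shows "a + b + c < a' + b' + c' \<and>
    weight (block (k, a, b, c)) + 2 * fpos (Suc k) \<le> weight (block (Suc k, a', b', c'))"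
proof -
  have "int (a + b) = int (a' + c') \<and> int (a + c) = int b' - int c'"
    using assms(2) by (rule block_coords_eq)
      (simp add: sum_at_block_coords(1), simp add: sum_at_block_coords(2))
  then have a': "int a' = int a + int b - int c'" and b': "int b' = int a + int c + int c'"
    by linarith+
  have "weight (block (Suc k, a', b', c')) - weight (block (k, a, b, c))
      = 2 * int a * fpos (Suc k) + 2 * int c' * fpos (Suc (Suc k))"
    unfolding weight_block a' b' by (simp add: algebra_simps)
  moreover have "2 * 1 * fpos (Suc k) \<le> 2 * int a * fpos (Suc k)"
    using assms(1) fpos_ge1[of "Suc k"] by (intro mult_right_mono) auto
  moreover have "0 \<le> 2 * int c' * fpos (Suc (Suc k))" using fpos_ge1[of "Suc (Suc k)"] by simp
  moreover have "a + b + c < a' + b' + c'" using a' b' assms(1) by linarith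
  ultimately show ?thesis by simp
qed

lemma no_previous_level:
  assumes "1 \<le> a'" "pt (block (Suc k, a, b, c)) = pt (block (k, a', b', c'))"
  shows "a' + b' + c' < a + b + c"
proof -
  have "int (a + c) = int (a' + b') \<and> int b - int c = int (a' + c')"
    using assms(2) by (rule block_coords_eq)
      (simp add: sum_at_block_coords(2), simp add: sum_at_block_coords(1))
  then show ?thesis using assms(1) by linarith
qed

lemma alpha_block_upper: "alpha (block (k, a, b, c)) \<le> real (a + b + c) * ginv ^ k"
proof -
  have "ginv ^ Suc k \<le> ginv ^ k" "ginv ^ Suc (Suc k) \<le> ginv ^ k"
    by (rule ginv_power_mono, simp)+
  then have "b * ginv ^ Suc k \<le> b * ginv ^ k" "c * ginv ^ Suc (Suc k) \<le> c * ginv ^ k"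
    by (simp_all add: mult_left_mono)
  then show ?thesis by (simp add: alpha_def sum_at_block algebra_simps)
qed

lemma alpha_block_lower:
  assumes "1 \<le> a"
  shows "ginv ^ k + (real (a + b + c) - 1) * ginv ^ Suc (Suc k) \<le> alpha (block (k, a, b, c))"
proof -
  have "ginv ^ Suc (Suc k) \<le> ginv ^ Suc k" "ginv ^ Suc (Suc k) \<le> ginv ^ k"
    by (rule ginv_power_mono, simp)+
  then have "(real a - 1) * ginv ^ Suc (Suc k) \<le> (real a - 1) * ginv ^ k"
    "b * ginv ^ Suc (Suc k) \<le> b * ginv ^ Suc k"
    using assms by (simp_all add: mult_left_mono)
  then show ?thesis by (simp add: alpha_def sum_at_block algebra_simps)
qed

lemma deeper_level_more_terms:
  assumes "1 \<le> a" "pt (block (k, a, b, c)) = pt (block (k', a', b', c'))" "Suc (Suc k) \<le> k'"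
  shows "a + b + c < a' + b' + c'"
proof -
  have "ginv ^ k + (real (a + b + c) - 1) * ginv ^ Suc (Suc k) \<le> alpha (block (k, a, b, c))"
    by (rule alpha_block_lower[OF assms(1)])
  also have "\<dots> = alpha (block (k', a', b', c'))" by (simp add: alpha_pt assms(2))
  also have "\<dots> \<le> real (a' + b' + c') * ginv ^ k'" by (rule alpha_block_upper)
  also have "\<dots> \<le> real (a' + b' + c') * ginv ^ Suc (Suc k)"
    by (rule mult_left_mono[OF ginv_power_mono[OF assms(3)]]) simp
  finally have "ginv ^ k - ginv ^ Suc (Suc k) + real (a + b + c) * ginv ^ Suc (Suc k)
      \<le> real (a' + b' + c') * ginv ^ Suc (Suc k)" by (simp add: algebra_simps)
  moreover have "ginv ^ Suc (Suc k) < ginv ^ k" by (rule ginv_power_strict_mono) simp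
  ultimately have "real (a + b + c) * ginv ^ Suc (Suc k) < real (a' + b' + c') * ginv ^ Suc (Suc k)"
    by linarith
  then show ?thesis using ginv_bounds(1) by (simp add: mult_less_cancel_right)
qed

lemma weight_block_lower: "int (a + b + c) * fpos k \<le> weight (block (k, a, b, c))"
proof -
  have "int b * fpos k \<le> int b * fpos (Suc k)" "int c * fpos k \<le> int c * fpos (Suc (Suc k))"
    by (intro mult_left_mono fpos_mono; simp)+
  then show ?thesis by (simp add: weight_block algebra_simps)
qed

lemma weight_block_upper:
  assumes "1 \<le> a"
  shows "weight (block (k, a, b, c)) + fpos (Suc k) \<le> int (a + b + c) * fpos (Suc (Suc k))"
proof -
  have "(int a - 1) * fpos k \<le> (int a - 1) * fpos (Suc (Suc k))"
    "int b * fpos (Suc k) \<le> int b * fpos (Suc (Suc k))"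
    using assms by (intro mult_left_mono fpos_mono; simp)+
  then show ?thesis by (simp add: weight_block algebra_simps)
qed

lemma compare_deep_level:
  assumes "1 \<le> a" "Suc (Suc k) \<le> k'" "a + b + c < a' + b' + c'"
  shows "weight (block (k, a, b, c)) + 2 * fpos (Suc k) \<le> weight (block (k', a', b', c'))"
proof -
  have "weight (block (k, a, b, c)) + 2 * fpos (Suc k) \<le> int (a + b + c + 1) * fpos (Suc (Suc k))"
    using weight_block_upper[OF assms(1), of k b c] fpos_Suc_mono[of "Suc k"] by (simp add: algebra_simps)
  also have "\<dots> \<le> int (a' + b' + c') * fpos k'"
    using assms(3) fpos_mono[OF assms(2)] fpos_ge1[of "Suc (Suc k)"] by (intro mult_mono) auto
  also have "\<dots> \<le> weight (block (k', a', b', c'))" by (rule weight_block_lower)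
  finally show ?thesis .
qed

lemma compare_normal_forms:
  assumes "1 \<le> a" "1 \<le> a'" "pt (block (k, a, b, c)) = pt (block (k', a', b', c'))"
    "a + b + c \<le> a' + b' + c'"
  shows "(k, a, b, c) = (k', a', b', c') \<or> (a + b + c < a' + b' + c' \<and>
    weight (block (k, a, b, c)) + 2 * fpos (Suc k) \<le> weight (block (k', a', b', c')))"
proof -
  consider "k' = k" | "k' = Suc k" | "k = Suc k'" | "Suc (Suc k) \<le> k'" | "Suc (Suc k') \<le> k"
    by linarith
  then show ?thesis
  proof cases
    case 1
    then show ?thesis using compare_same_level[of k a b c a' b' c'] assms(3,4) by auto
  next
    case 2
    then show ?thesis using compare_next_level[OF assms(1), of k b c a' b' c'] assms(3) by simp
  next
    case 3
    then show ?thesis using no_previous_level[OF assms(2), of k' a b c b' c'] assms(3,4) by simp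
  next
    case 4
    have "a + b + c < a' + b' + c'" by (rule deeper_level_more_terms[OF assms(1,3) 4])
    then show ?thesis using compare_deep_level[OF assms(1) 4] by simp
  next
    case 5
    have "a' + b' + c' < a + b + c" by (rule deeper_level_more_terms[OF assms(2) assms(3)[symmetric] 5])
    then show ?thesis using assms(4) by simp
  qed
qed

text \<open>Normal forms with s terms, the weight after splitting one term (an extra 2 f(k+1)), and the
  forms that are maximal for the bound d: light enough, but too heavy to be split.\<close>

definition normal_forms :: "nat \<Rightarrow> quad set" where
  "normal_forms s = {(k, a, b, c). 1 \<le> a \<and> a + b + c = s}"

fun split_weight :: "quad \<Rightarrow> int" where
  "split_weight (k, a, b, c) = weight (block (k, a, b, c)) + 2 * fpos (Suc k)"

definition maximal_forms :: "nat \<Rightarrow> nat \<Rightarrow> quad set" where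
  "maximal_forms d s = {x \<in> normal_forms s. weight (block x) \<le> int d \<and> int d < split_weight x}"

lemma split_block:
  assumes "1 \<le> a"
  obtains y where "pt (block y) = pt (block (k, a, b, c))" "length (block y) = a + b + c + 1"
    "weight (block y) = split_weight (k, a, b, c)"
proof (cases "2 \<le> a")
  case True
  let ?y = "(k, a - 1, b + 1, c + 1)"
  have "pt (block ?y) = pt (block (k, a, b, c))"
  proof (rule pt_eqI)
    fix g :: "nat \<Rightarrow> int"
    assume "backward_fib g"
    then show "sum_at g (block ?y) = sum_at g (block (k, a, b, c))"
      using backward_fibD[of g k] True by (simp add: sum_at_block of_nat_diff algebra_simps)
  qed
  moreover have "weight (block ?y) = split_weight (k, a, b, c)"
    using True by (simp add: weight_block of_nat_diff algebra_simps)
  ultimately show ?thesis using True by (intro that[of ?y]) simp_all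
next
  case False
  let ?y = "(Suc k, b + 1, c + 1, 0)"
  have a: "a = 1" using assms False by simp
  have "pt (block ?y) = pt (block (k, a, b, c))"
  proof (rule pt_eqI)
    fix g :: "nat \<Rightarrow> int"
    assume "backward_fib g"
    then show "sum_at g (block ?y) = sum_at g (block (k, a, b, c))"
      using backward_fibD[of g k] a by (simp add: sum_at_block algebra_simps)
  qed
  moreover have "weight (block ?y) = split_weight (k, a, b, c)"
    using a by (simp add: weight_block algebra_simps)
  ultimately show ?thesis using a by (intro that[of ?y]) simp_all
qed

lemma Eds_subset_image:
  assumes "1 \<le> s"
  shows "Eds d s \<subseteq> (\<lambda>x. pt (block x)) ` maximal_forms d s"
proof
  fix p
  assume p: "p \<in> Eds d s"
  then obtain xs where xs: "length xs = s" "pt xs = p" "weight xs \<le> int d"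
    by (auto simp: Eds_adm adm_def)
  have max: "\<not> adm d p t" if "s < t" for t using p that by (simp add: Eds_adm)
  have "xs \<noteq> []" using xs(1) assms by auto
  then obtain k a b c where nf: "1 \<le> a" "pt (block (k, a, b, c)) = pt xs" "length xs \<le> a + b + c"
    "weight (block (k, a, b, c)) \<le> weight xs"
    using normal_form_exists by blast
  have "adm d p (a + b + c)" unfolding adm_def
    using nf xs by (intro exI[of _ "block (k, a, b, c)"]) simp
  then have size: "a + b + c = s" using max[of "a + b + c"] nf(3) xs(1) by linarith
  have "int d < split_weight (k, a, b, c)"
  proof (rule ccontr)
    assume heavy: "\<not> int d < split_weight (k, a, b, c)"
    obtain y where "pt (block y) = pt (block (k, a, b, c))" "length (block y) = a + b + c + 1"
      "weight (block y) = split_weight (k, a, b, c)"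
      using split_block[OF nf(1)] by blast
    then have "adm d p (s + 1)" unfolding adm_def
      using heavy nf(2) xs(2) size by (intro exI[of _ "block y"]) simp
    then show False using max by simp
  qed
  then have "(k, a, b, c) \<in> maximal_forms d s"
    using nf xs size by (simp add: maximal_forms_def normal_forms_def)
  then show "p \<in> (\<lambda>x. pt (block x)) ` maximal_forms d s" using nf(2) xs(2) by force
qed

lemma image_subset_Eds: "(\<lambda>x. pt (block x)) ` maximal_forms d s \<subseteq> Eds d s"
proof
  fix p
  assume "p \<in> (\<lambda>x. pt (block x)) ` maximal_forms d s"
  then obtain k a b c where x: "1 \<le> a" "a + b + c = s" "weight (block (k, a, b, c)) \<le> int d"
    "int d < split_weight (k, a, b, c)" and p: "p = pt (block (k, a, b, c))"
    by (auto simp: maximal_forms_def normal_forms_def)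
  have "adm d p s" unfolding adm_def using x p by (intro exI[of _ "block (k, a, b, c)"]) simp
  moreover have "\<not> adm d p t" if "s < t" for t
  proof
    assume "adm d p t"
    then obtain xs where xs: "length xs = t" "pt xs = p" "weight xs \<le> int d"
      unfolding adm_def by blast
    have "xs \<noteq> []" using xs(1) that by auto
    then obtain k' a' b' c' where nf: "1 \<le> a'" "pt (block (k', a', b', c')) = pt xs"
      "length xs \<le> a' + b' + c'" "weight (block (k', a', b', c')) \<le> weight xs"
      using normal_form_exists by blast
    have "(k, a, b, c) = (k', a', b', c') \<or> (a + b + c < a' + b' + c' \<and>
        weight (block (k, a, b, c)) + 2 * fpos (Suc k) \<le> weight (block (k', a', b', c')))"
      using x(1,2) nf p xs that by (intro compare_normal_forms) simp_all
    then show False using x nf xs that by auto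
  qed
  ultimately show "p \<in> Eds d s" by (simp add: Eds_adm)
qed

lemma Eds_eq_image: "1 \<le> s \<Longrightarrow> Eds d s = (\<lambda>x. pt (block x)) ` maximal_forms d s"
  using Eds_subset_image image_subset_Eds by blast

lemma pt_block_inj: "inj_on (\<lambda>x. pt (block x)) (normal_forms s)"
proof (rule inj_onI)
  fix x y
  assume "x \<in> normal_forms s" "y \<in> normal_forms s" and eq: "pt (block x) = pt (block y)"
  then obtain k a b c k' a' b' c' where "x = (k, a, b, c)" "y = (k', a', b', c')"
    "1 \<le> a" "1 \<le> a'" "a + b + c = s" "a' + b' + c' = s"
    by (auto simp: normal_forms_def)
  then show "x = y" using compare_normal_forms[of a a' k b c k' b' c'] eq by auto
qed

lemma Eds_zero: "Eds d 0 = {(0, 0)}"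
proof -
  have "adm d p 0 \<longleftrightarrow> p = (0, 0)" for p by (auto simp: adm_def pt_def)
  moreover have "\<not> adm d (0, 0) t" if "0 < t" for t
  proof
    assume "adm d (0, 0) t"
    then obtain xs where "length xs = t" "pt xs = (0, 0)" unfolding adm_def by blast
    then have "xs \<noteq> []" "alpha xs = 0" using that by (auto simp: alpha_pt)
    then show False using alpha_pos by fastforce
  qed
  ultimately show ?thesis by (auto simp: Eds_adm)
qed

lemma Eds_too_many_terms: "d < s \<Longrightarrow> Eds d s = {}"
  using adm_length_le by (fastforce simp: Eds_adm)

lemma weight_block_low_levels:
  "weight (block (0, a, b, c)) = int a + int b + 2 * int c"
  "weight (block (1, a, b, c)) = int a + 2 * int b + 3 * int c"
  "weight (block (2, a, b, c)) = 2 * int a + 3 * int b + 5 * int c"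
  by (simp_all add: weight_block eval_nat_numeral)

lemma weight_block_high_levels:
  assumes "3 \<le> k"
  shows "3 * int (a + b + c) \<le> weight (block (k, a, b, c))"
proof -
  have "3 \<le> fpos k" using fpos_mono[OF assms] by (simp add: eval_nat_numeral)
  then have "int (a + b + c) * 3 \<le> int (a + b + c) * fpos k" by (rule mult_left_mono) simp
  then show ?thesis using weight_block_lower[of a b c k] by linarith
qed

lemma weight_ge_size: "x \<in> normal_forms s \<Longrightarrow> int s \<le> weight (block x)"
  using length_le_weight[of "block x"] by (auto simp: normal_forms_def)

lemma normal_forms_of_weight_size:
  assumes "1 \<le> s"
  shows "{y \<in> normal_forms s. weight (block y) = int s} = (\<lambda>a. (0, a, s - a, 0)) ` {1..s} \<union> {(1, s, 0, 0)}"
proof (intro equalityI subsetI)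
  fix y
  assume "y \<in> {y \<in> normal_forms s. weight (block y) = int s}"
  then obtain k a b c where y: "y = (k, a, b, c)" "1 \<le> a" "a + b + c = s" "weight (block (k, a, b, c)) = int s"
    by (auto simp: normal_forms_def)
  consider "k = 0" | "k = 1" | "k = 2" | "3 \<le> k" by linarith
  then show "y \<in> (\<lambda>a. (0, a, s - a, 0)) ` {1..s} \<union> {(1, s, 0, 0)}"
    by cases (use y weight_block_low_levels[of a b c] weight_block_high_levels[of k a b c] in auto)
qed (use assms in \<open>auto simp: normal_forms_def weight_block\<close>)

lemma normal_forms_of_weight_size_plus_one:
  assumes "1 \<le> s"
  shows "{y \<in> normal_forms s. weight (block y) = int s + 1} =
    (\<lambda>a. (0, a, s - 1 - a, 1)) ` {1..<s} \<union> {if s = 1 then (2, 1, 0, 0) else (1, s - 1, 1, 0)}"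
proof (intro equalityI subsetI)
  fix y
  assume "y \<in> {y \<in> normal_forms s. weight (block y) = int s + 1}"
  then obtain k a b c where y: "y = (k, a, b, c)" "1 \<le> a" "a + b + c = s"
    "weight (block (k, a, b, c)) = int s + 1"
    by (auto simp: normal_forms_def)
  consider "k = 0" | "k = 1" | "k = 2" | "3 \<le> k" by linarith
  then show "y \<in> (\<lambda>a. (0, a, s - 1 - a, 1)) ` {1..<s} \<union> {if s = 1 then (2, 1, 0, 0) else (1, s - 1, 1, 0)}"
  proof cases
    case 1
    then have "weight (block (0, a, b, c)) = int s + 1" using y by simp
    then have "c = 1" "a < s" using y(2,3) unfolding weight_block_low_levels by presburger+
    then show ?thesis using y 1 by (auto simp: image_iff intro!: bexI[of _ a])
  next
    case 2
    then have "weight (block (1, a, b, c)) = int s + 1" using y by simp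
    then have "b = 1" "c = 0" "s \<noteq> 1" using y(2,3) unfolding weight_block_low_levels by presburger+
    then show ?thesis using y 2 by auto
  next
    case 3
    then have "weight (block (2, a, b, c)) = int s + 1" using y by simp
    then have "a = 1" "b = 0" "c = 0" using y(2,3) unfolding weight_block_low_levels by presburger+
    then show ?thesis using y 3 by auto
  next
    case 4
    then have "3 * int s \<le> int s + 1" using y weight_block_high_levels[of k a b c] by simp
    then show ?thesis using assms by linarith
  qed
qed (use assms in \<open>auto simp: normal_forms_def weight_block eval_nat_numeral split: if_splits\<close>)

lemma card_normal_forms_of_weight:
  assumes "1 \<le> s"
  shows "card {y \<in> normal_forms s. weight (block y) = int s} = s + 1"
    and "card {y \<in> normal_forms s. weight (block y) = int s + 1} = s"
proof -
  have "card ((\<lambda>a. (0::nat, a, s - a, 0::nat)) ` {1..s}) = s" by (simp add: card_image inj_on_def)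
  then show "card {y \<in> normal_forms s. weight (block y) = int s} = s + 1"
    unfolding normal_forms_of_weight_size[OF assms] by (subst card_Un_disjoint) auto
  have "card ((\<lambda>a. (0::nat, a, s - 1 - a, 1::nat)) ` {1..<s}) = s - 1" by (simp add: card_image inj_on_def)
  then show "card {y \<in> normal_forms s. weight (block y) = int s + 1} = s"
    unfolding normal_forms_of_weight_size_plus_one[OF assms] using assms by (subst card_Un_disjoint) auto
qed

text \<open>lift is a bijection from all normal forms with s terms onto those of weight > s+1,
  raising the weight by exactly 2 f(k+1); unlift is its inverse.\<close>

fun lift :: "quad \<Rightarrow> quad" where
  "lift (k, a, b, c) =
     (if 3 \<le> a then (k, a - 2, b, c + 2)
      else if a = 2 then (if b = 0 then (k + 2, c + 2, 0, 0) else (k + 1, b, c + 2, 0))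
      else if b \<noteq> 0 then (k + 1, b, c, 1)
      else if c \<noteq> 0 then (k + 2, c, 1, 0)
      else (k + 3, 1, 0, 0))"

fun unlift :: "quad \<Rightarrow> quad" where
  "unlift (k, a, b, c) =
     (if 2 \<le> c then (k, a + 2, b, c - 2)
      else if c = 1 then (k - 1, 1, a, b)
      else if 2 \<le> b then (k - 1, 2, a, b - 2)
      else if b = 1 then (k - 2, 1, 0, a)
      else if 2 \<le> a then (k - 2, 2, 0, a - 2)
      else (k - 3, 1, 0, 0))"

declare lift.simps [simp del] unlift.simps [simp del]

lemma weight_lift:
  assumes "1 \<le> a"
  shows "weight (block (lift (k, a, b, c))) = split_weight (k, a, b, c)"
proof -
  consider "3 \<le> a" | "a = 2" "b = 0" | "a = 2" "b \<noteq> 0" | "a = 1" "b \<noteq> 0" | "a = 1" "b = 0" "c \<noteq> 0"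
    | "a = 1" "b = 0" "c = 0"
    using assms by linarith
  then show ?thesis by cases (simp_all add: lift.simps weight_block of_nat_diff algebra_simps eval_nat_numeral)
qed

lemma lift_normal_forms: "x \<in> normal_forms s \<Longrightarrow> lift x \<in> normal_forms s"
  by (cases x) (auto simp: normal_forms_def lift.simps)

lemma unlift_lift: "x \<in> normal_forms s \<Longrightarrow> unlift (lift x) = x"
  by (cases x) (auto simp: normal_forms_def lift.simps unlift.simps)

text \<open>Normal forms of weight > s+1 lie high enough for unlift to be defined.\<close>

lemma lift_unlift:
  assumes "y \<in> normal_forms s" "int s + 1 < weight (block y)"
  shows "unlift y \<in> normal_forms s \<and> lift (unlift y) = y"
proof -
  obtain k a b c where y: "y = (k, a, b, c)" "1 \<le> a" "a + b + c = s"
    using assms(1) by (auto simp: normal_forms_def)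
  have w: "int s + 1 < weight (block (k, a, b, c))" using assms(2) y(1) by simp
  have low0: "2 \<le> c" if "k = 0" using w y(3) unfolding that weight_block_low_levels by presburger
  have low1: "2 \<le> b \<or> 1 \<le> c" if "k = 1" using w y(3) unfolding that weight_block_low_levels by presburger
  have low2: "2 \<le> a \<or> 1 \<le> b \<or> 1 \<le> c" if "k = 2"
    using w y(3) unfolding that weight_block_low_levels by presburger
  have "1 \<le> k" if "c \<le> 1" using low0 that by force
  moreover have "2 \<le> k" if "c = 0" "b \<le> 1" using low0 low1 that by force
  moreover have "3 \<le> k" if "c = 0" "b = 0" "a \<le> 1" using low0 low1 low2 that by force
  ultimately show ?thesis using y by (auto simp: normal_forms_def lift.simps unlift.simps)
qed

lemma lift_bij: "bij_betw lift (normal_forms s) {y \<in> normal_forms s. int s + 1 < weight (block y)}"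
proof (rule bij_betw_byWitness[where f' = unlift])
  show "\<forall>x\<in>normal_forms s. unlift (lift x) = x" using unlift_lift by blast
  show "\<forall>y\<in>{y \<in> normal_forms s. int s + 1 < weight (block y)}. lift (unlift y) = y"
    using lift_unlift by blast
  show "unlift ` {y \<in> normal_forms s. int s + 1 < weight (block y)} \<subseteq> normal_forms s"
    using lift_unlift by blast
  show "lift ` normal_forms s \<subseteq> {y \<in> normal_forms s. int s + 1 < weight (block y)}"
  proof (intro image_subsetI CollectI conjI)
    fix x
    assume x: "x \<in> normal_forms s"
    then obtain k a b c where "x = (k, a, b, c)" "1 \<le> a" by (auto simp: normal_forms_def)
    then have "weight (block (lift x)) = weight (block x) + 2 * fpos (Suc k)"
      using weight_lift by simp
    then show "int s + 1 < weight (block (lift x))"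
      using weight_ge_size[OF x] fpos_ge1[of "Suc k"] by linarith
    show "lift x \<in> normal_forms s" by (rule lift_normal_forms[OF x])
  qed
qed

text \<open>Only finitely many normal forms have weight <= d (the level k satisfies k <= f(k) <= d).\<close>

lemma finite_bounded_normal_forms: "finite {x \<in> normal_forms s. weight (block x) \<le> int d}"
proof (rule finite_subset)
  show "{x \<in> normal_forms s. weight (block x) \<le> int d} \<subseteq> {0..d} \<times> {0..s} \<times> {0..s} \<times> {0..s}"
  proof
    fix x
    assume "x \<in> {x \<in> normal_forms s. weight (block x) \<le> int d}"
    then obtain k a b c where x: "x = (k, a, b, c)" "1 \<le> a" "a + b + c = s"
      "weight (block (k, a, b, c)) \<le> int d"
      by (auto simp: normal_forms_def)
    have "fpos k \<le> int a * fpos k" using x(2) fpos_ge1[of k] by simp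
    moreover have "0 \<le> int b * fpos (Suc k)" "0 \<le> int c * fpos (Suc (Suc k))"
      using fpos_ge1[of "Suc k"] fpos_ge1[of "Suc (Suc k)"] by simp_all
    ultimately have "int k \<le> weight (block (k, a, b, c))"
      using fpos_ge_index[of k] unfolding weight_block by linarith
    then show "x \<in> {0..d} \<times> {0..s} \<times> {0..s} \<times> {0..s}" using x by auto
  qed
qed simp

lemma card_filter_bij_betw:
  assumes "bij_betw f A B" "\<And>x. x \<in> A \<Longrightarrow> P (f x) \<longleftrightarrow> Q x"
  shows "card {x \<in> A. Q x} = card {y \<in> B. P y}"
proof (rule bij_betw_same_card)
  have "f ` {x \<in> A. Q x} = {y \<in> B. P y}"
    using assms bij_betw_imp_surj_on[OF assms(1)] by force
  then show "bij_betw f {x \<in> A. Q x} {y \<in> B. P y}"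
    using bij_betw_imp_inj_on[OF assms(1)] by (simp add: bij_betw_def inj_on_subset)
qed

lemma weight_lt_split_weight: "weight (block x) < split_weight x"
proof (cases x)
  case (fields k a b c)
  then show ?thesis using fpos_ge1[of "Suc k"] by simp
qed

text \<open>The maximal forms are the forms of weight <= d minus those whose split has weight <= d;
  via lift the latter correspond to forms of weight in (s+1, d], so exactly the forms of
  weight <= min d (s+1) remain.\<close>

lemma card_maximal_forms_eq_light:
  "card (maximal_forms d s) =
    card {y \<in> normal_forms s. weight (block y) \<le> int d \<and> weight (block y) \<le> int s + 1}"
proof -
  let ?N = "normal_forms s"
  let ?bounded = "{y \<in> ?N. weight (block y) \<le> int d}"
  let ?heavy = "{x \<in> ?N. split_weight x \<le> int d}"
  let ?high = "{y \<in> ?N. int s + 1 < weight (block y) \<and> weight (block y) \<le> int d}"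
  let ?low = "{y \<in> ?N. weight (block y) \<le> int d \<and> weight (block y) \<le> int s + 1}"
  have fin: "finite ?bounded" by (rule finite_bounded_normal_forms)
  have "maximal_forms d s = ?bounded - ?heavy" by (auto simp: maximal_forms_def)
  moreover have "?heavy \<subseteq> ?bounded"
    by (auto intro: order.trans[OF less_imp_le[OF weight_lt_split_weight]])
  ultimately have "card (maximal_forms d s) = card ?bounded - card ?heavy"
    using fin by (simp add: card_Diff_subset finite_subset)
  moreover have "card ?heavy = card ?high"
  proof -
    have "card ?heavy = card {y \<in> {y \<in> ?N. int s + 1 < weight (block y)}. weight (block y) \<le> int d}"
    proof (rule card_filter_bij_betw[OF lift_bij])
      fix x
      assume "x \<in> ?N"
      then obtain k a b c where "x = (k, a, b, c)" "1 \<le> a" by (auto simp: normal_forms_def)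
      then show "weight (block (lift x)) \<le> int d \<longleftrightarrow> split_weight x \<le> int d" by (simp add: weight_lift)
    qed
    also have "{y \<in> {y \<in> ?N. int s + 1 < weight (block y)}. weight (block y) \<le> int d} = ?high" by auto
    finally show ?thesis .
  qed
  moreover have "?bounded = ?high \<union> ?low" "?high \<inter> ?low = {}" by auto
  then have "card ?bounded = card ?high + card ?low"
    using fin by (simp add: card_Un_disjoint)
  ultimately show ?thesis by linarith
qed

lemma card_maximal_forms:
  assumes "1 \<le> s"
  shows "card (maximal_forms d s) = (if s < d then 2 * s + 1 else if s = d then d + 1 else 0)"
proof -
  let ?W = "\<lambda>m. {y \<in> normal_forms s. weight (block y) = m}"
  have low: "{y \<in> normal_forms s. weight (block y) \<le> int d \<and> weight (block y) \<le> int s + 1} =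
      (if d < s then {} else if d = s then ?W (int s) else ?W (int s) \<union> ?W (int s + 1))"
    using weight_ge_size[of _ s] by (force simp: not_less)
  have card: "card (?W (int s)) = s + 1" "card (?W (int s + 1)) = s"
    by (rule card_normal_forms_of_weight[OF assms])+
  then have "finite (?W (int s))" "finite (?W (int s + 1))" using assms by (simp_all add: card_ge_0_finite)
  moreover have "?W (int s) \<inter> ?W (int s + 1) = {}" by auto
  ultimately have "card (?W (int s) \<union> ?W (int s + 1)) = 2 * s + 1" using card by (simp add: card_Un_disjoint)
  then show ?thesis unfolding card_maximal_forms_eq_light low using card(1) by auto
qed

theorem mainTheorem1:
  fixes d s :: nat
  shows "finite (Eds d s) \<and>
         chi d s = (if s < d then 2 * s + 1 else if s = d then d + 1 else 0) \<and>
         (d < s \<longrightarrow> Eds d s = {})"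
proof (cases "s = 0")
  case True
  then show ?thesis using Eds_zero[of d] by (simp add: chi_def)
next
  case False
  then have s: "1 \<le> s" by simp
  have "maximal_forms d s \<subseteq> {x \<in> normal_forms s. weight (block x) \<le> int d}"
    by (auto simp: maximal_forms_def)
  then have fin: "finite (maximal_forms d s)" using finite_bounded_normal_forms by (rule finite_subset)
  have inj: "inj_on (\<lambda>x. pt (block x)) (maximal_forms d s)"
    using pt_block_inj by (rule inj_on_subset) (auto simp: maximal_forms_def)
  have "chi d s = card (maximal_forms d s)"
    unfolding chi_def Eds_eq_image[OF s] by (rule card_image[OF inj])
  moreover have "finite (Eds d s)" unfolding Eds_eq_image[OF s] using fin by simp
  ultimately show ?thesis using card_maximal_forms[OF s] Eds_too_many_terms[of d s] by simp
qed

end
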